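(* Fix a CW structure on $\mathbb{R}$ and an open subspace $P\subset\mathbb{R}^n\times\mathbb{R}$, regarded as a space over $\mathbb{R}$ via the projection $\tau_P$ onto the last coordinate. Then the natural function $$\Gamma_P(\mathbb{R})\longrightarrow\lim_c\pi_0\Gamma_P(c),$$ where $c$ ranges over the closed cells of $\mathbb{R}$ (ordered by reverse inclusion, with restriction maps), is surjective.
   Context: For a subset $A\subset\mathbb{R}$, $\Gamma_P(A)$ is the space (compact-open topology) of sections of $\tau_P$ over $A$, i.e. continuous maps $s\colon A\to P$ with $\tau_P\circ s=\mathrm{id}_A$; $\pi_0$ denotes the set of path components. The map sends a global section to the family of path components of its restrictions to the closed cells. *)

theory Defs
  imports "HOL-Analysis.Analysis"
begin

text \<open>A CW structure on the real line, described by its set V of 0-cells: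
  V is closed and discrete (equivalently, meets every compact interval in a finite set)
  and unbounded above and below (the open 1-cells, i.e. the components of the complement
  of V, must be bounded since closed cells are compact).\<close>
definition CW_structure_R :: "real set \<Rightarrow> bool" where
  "CW_structure_R V \<longleftrightarrow>
     (\<forall>a b. finite (V \<inter> {a..b})) \<and> (\<forall>x. \<exists>v\<in>V. x < v) \<and> (\<forall>x. \<exists>v\<in>V. v < x)"

definition closed_cells :: "real set \<Rightarrow> real set set" where
  "closed_cells V =
     {{v} | v. v \<in> V} \<union> {{a..b} | a b. a \<in> V \<and> b \<in> V \<and> a < b \<and> {a<..<b} \<inter> V = {}}"

definition sections :: "('a::topological_space \<times> real) set \<Rightarrow> real set \<Rightarrow> (real \<Rightarrow> 'a \<times> real) set" where
  "sections P A = {s. continuous_on A s \<and> s ` A \<subseteq> P \<and> (\<forall>t\<in>A. snd (s t) = t) \<and> s \<in> extensional A}"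

definition compact_open :: "real set \<Rightarrow> (real \<Rightarrow> 'b::topological_space) set \<Rightarrow> (real \<Rightarrow> 'b) topology" where
  "compact_open A F =
     topology_generated_by {{f \<in> F. f ` K \<subseteq> U} | K U. K \<subseteq> A \<and> compact K \<and> open U}"

definition Gamma :: "('a::topological_space \<times> real) set \<Rightarrow> real set \<Rightarrow> (real \<Rightarrow> 'a \<times> real) topology" where
  "Gamma P A = compact_open A (sections P A)"

end

theory Submission
  imports Defs
begin

text \<open>Choose a section on every closed 1-cell in the prescribed path component. Sections in
  one component of \<open>\<Gamma>\<^sub>P({v})\<close> differ by a path in the fibre over \<open>v\<close>, and since \<open>P\<close> is open such
  a path can be pushed into a section over a cell by a homotopy supported in a small
  neighbourhood of the endpoint \<open>v\<close>. Doing this at both endpoints makes the chosen sections agree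
  at every vertex with a fixed point of the fibre, so they glue to a global section.\<close>

lemma sections_mem_compact_open_basis:
  "sections P A \<in> {{f \<in> sections P A. f ` K \<subseteq> U} | K U. K \<subseteq> A \<and> compact K \<and> open U}"
proof -
  have "sections P A = {f \<in> sections P A. f ` {} \<subseteq> UNIV}" by simp
  then show ?thesis by blast
qed

lemma topspace_Gamma [simp]: "topspace (Gamma P A) = sections P A"
  unfolding Gamma_def compact_open_def topology_generated_by_topspace
  using sections_mem_compact_open_basis[of P A] by blast

lemma continuous_map_Gamma_eval:
  fixes P :: "('a::topological_space \<times> real) set"
  assumes "t \<in> A"
  shows "continuous_map (Gamma P A) euclidean (\<lambda>f. f t)"
  unfolding continuous_map_def
proof (intro conjI allI impI)
  show "(\<lambda>f. f t) \<in> topspace (Gamma P A) \<rightarrow> topspace euclidean" by simp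
  fix U :: "('a \<times> real) set"
  assume "openin euclidean U"
  then have "{f \<in> sections P A. f ` {t} \<subseteq> U}
      \<in> {{f \<in> sections P A. f ` K \<subseteq> U} | K U. K \<subseteq> A \<and> compact K \<and> open U}"
    using assms by (intro CollectI exI[of _ "{t}"] exI[of _ U]) auto
  then have "openin (Gamma P A) {f \<in> sections P A. f ` {t} \<subseteq> U}"
    unfolding Gamma_def compact_open_def openin_topology_generated_by_iff
    by (rule generate_topology_on.Basis)
  then show "openin (Gamma P A) {f \<in> topspace (Gamma P A). f t \<in> U}"
    by simp
qed

text \<open>The tube lemma: the sections \<open>H(l,-)\<close> avoid the closed set \<open>-U\<close> on \<open>K\<close> exactly for \<open>l\<close>
  outside the projection of a compact subset of \<open>[0,1] \<times> K\<close>.\<close>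
lemma pathin_Gamma_homotopy:
  fixes H :: "real \<times> real \<Rightarrow> 'a::topological_space \<times> real"
  assumes H: "continuous_on ({0..1} \<times> A) H"
    and sec: "\<And>l. l \<in> {0..1} \<Longrightarrow> restrict (\<lambda>t. H (l,t)) A \<in> sections P A"
  shows "pathin (Gamma P A) (\<lambda>l. restrict (\<lambda>t. H (l,t)) A)"
  unfolding pathin_def Gamma_def compact_open_def
proof (rule continuous_on_generated_topo)
  let ?g = "\<lambda>l. restrict (\<lambda>t. H (l,t)) A"
  show "?g ` topspace (top_of_set {0..1})
      \<subseteq> \<Union> {{f \<in> sections P A. f ` K \<subseteq> U} | K U. K \<subseteq> A \<and> compact K \<and> open U}"
  proof
    fix g
    assume "g \<in> ?g ` topspace (top_of_set {0..1})"
    then have "g \<in> sections P A" using sec by auto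
    then show "g \<in> \<Union> {{f \<in> sections P A. f ` K \<subseteq> U} | K U. K \<subseteq> A \<and> compact K \<and> open U}"
      using sections_mem_compact_open_basis[of P A] by blast
  qed
  fix W
  assume "W \<in> {{f \<in> sections P A. f ` K \<subseteq> U} | K U. K \<subseteq> A \<and> compact K \<and> open U}"
  then obtain K U where W: "W = {f \<in> sections P A. f ` K \<subseteq> U}"
    and K: "K \<subseteq> A" "compact K" and U: "open U"
    by blast
  define S where "S = ({0..1} \<times> K) \<inter> H -` (- U)"
  have "compact ({0..1::real} \<times> K)"
    using K(2) by (intro compact_Times) auto
  moreover have "closed S"
    unfolding S_def
  proof (rule continuous_closed_preimage)
    show "continuous_on ({0..1} \<times> K) H"
      using H by (rule continuous_on_subset) (use K(1) in auto)
  qed (use \<open>compact ({0..1} \<times> K)\<close> U in \<open>auto intro: compact_imp_closed\<close>)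
  ultimately have "compact S"
    using compact_Int_closed[of "{0..1} \<times> K" S] unfolding S_def by (simp add: Int_absorb1)
  then have "closed (fst ` S)"
    by (intro compact_imp_closed compact_continuous_image continuous_intros)
  have eq: "?g -` W \<inter> topspace (top_of_set {0..1}) = {0..1} \<inter> - (fst ` S)"
  proof (intro set_eqI iffI)
    fix l
    assume l: "l \<in> ?g -` W \<inter> topspace (top_of_set {0..1})"
    then have "\<forall>k\<in>K. H (l,k) \<in> U"
      using K(1) unfolding W by auto
    with l show "l \<in> {0..1} \<inter> - (fst ` S)"
      unfolding S_def by auto
  next
    fix l
    assume l: "l \<in> {0..1} \<inter> - (fst ` S)"
    have "H (l,k) \<in> U" if "k \<in> K" for k
    proof (rule ccontr)
      assume "H (l,k) \<notin> U"
      with l that have "(l,k) \<in> S"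
        unfolding S_def by auto
      then have "l \<in> fst ` S"
        by (rule rev_image_eqI) simp
      with l show False by auto
    qed
    then show "l \<in> ?g -` W \<inter> topspace (top_of_set {0..1})"
      using l sec K(1) unfolding W by auto
  qed
  show "openin (top_of_set {0..1}) (?g -` W \<inter> topspace (top_of_set {0..1}))"
    unfolding eq using \<open>closed (fst ` S)\<close> by (intro openin_open_Int open_Compl)
qed

lemma path_components_of_mem_iff:
  assumes "C \<in> path_components_of X" "f \<in> C"
  shows "g \<in> C \<longleftrightarrow> path_component_of X f g"
proof -
  obtain a where C: "C = Collect (path_component_of X a)"
    using assms(1) unfolding path_components_of_def by blast
  with assms(2) have "path_component_of X a f"
    by simp
  then show ?thesis
    unfolding C mem_Collect_eq
    by (meson path_component_of_sym path_component_of_trans)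
qed

lemma fibre_path_of_path_component_Gamma_singleton:
  assumes "path_component_of (Gamma P {a}) g h"
  obtains \<gamma> where "path \<gamma>" "\<gamma> 0 = fst (g a)" "\<gamma> 1 = fst (h a)" "\<forall>u\<in>{0..1}. (\<gamma> u, a) \<in> P"
proof -
  obtain p where p: "pathin (Gamma P {a}) p" "p 0 = g" "p 1 = h"
    using assms unfolding path_component_of_def by blast
  have "continuous_map (top_of_set {0..1}) euclidean ((\<lambda>f. f a) \<circ> p)"
    using p(1) unfolding pathin_def by (rule continuous_map_compose) (rule continuous_map_Gamma_eval, simp)
  then have "continuous_on {0..1} (\<lambda>u. p u a)"
    by (simp add: o_def)
  then have "path (\<lambda>u. fst (p u a))"
    unfolding path_def by (rule continuous_on_fst)
  moreover have "(fst (p u a), a) \<in> P" if "u \<in> {0..1}" for u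
  proof -
    have "p u \<in> sections P {a}"
      using continuous_map_image_subset_topspace[OF p(1)[unfolded pathin_def]] that by auto
    then have "p u a \<in> P" "snd (p u a) = a"
      unfolding sections_def by auto
    then show ?thesis by (metis prod.collapse)
  qed
  ultimately show ?thesis
    using p(2,3) by (intro that[of "\<lambda>u. fst (p u a)"]) auto
qed

lemma translate_fibre_path_near_point:
  fixes f :: "real \<Rightarrow> 'a::real_normed_vector \<times> real"
  assumes P: "open P" and f: "continuous_on A f" "a \<in> A" "snd (f a) = a"
    and \<gamma>: "path \<gamma>" "\<gamma> 0 = fst (f a)" "\<forall>u\<in>{0..1}. (\<gamma> u, a) \<in> P"
  shows "\<exists>d>0. \<forall>t\<in>A. \<forall>u\<in>{0..1}. dist t a < d \<longrightarrow> (fst (f t) + (\<gamma> u - \<gamma> 0), t) \<in> P"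
proof -
  define K where "K = (\<lambda>u. (\<gamma> u, a)) ` {0..1}"
  have "compact K"
    unfolding K_def using \<gamma>(1) unfolding path_def
    by (intro compact_continuous_image continuous_intros) auto
  moreover have "K \<subseteq> P"
    using \<gamma>(3) unfolding K_def by auto
  ultimately obtain e where e: "e > 0" "\<And>z. z \<in> K \<Longrightarrow> ball z e \<subseteq> P"
    using compact_subset_open_imp_ball_epsilon_subset[OF _ P] by (metis UN_subset_iff)
  obtain d where d: "d > 0" "\<And>t. t \<in> A \<Longrightarrow> dist t a < d \<Longrightarrow> dist (f t) (f a) < e/2"
    using f(1,2) e(1) unfolding continuous_on_iff by (metis half_gt_zero)
  show ?thesis
  proof (intro exI[of _ "min d (e/2)"] conjI ballI impI)
    show "min d (e/2) > 0"
      using d(1) e(1) by simp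
    fix t u :: real
    assume tA: "t \<in> A" and u: "u \<in> {0..1}" and td: "dist t a < min d (e/2)"
    show "(fst (f t) + (\<gamma> u - \<gamma> 0), t) \<in> P"
    proof -
      have "norm (fst (f t) - fst (f a)) < e/2"
        using dist_fst_le[of "f t" "f a"] d(2)[OF tA] td by (simp add: dist_norm)
      moreover have "norm (a - t) < e/2"
        using td by (metis dist_commute dist_norm min_less_iff_conj)
      moreover have "dist (\<gamma> u, a) (fst (f t) + (\<gamma> u - \<gamma> 0), t) = norm (fst (f a) - fst (f t), a - t)"
        using \<gamma>(2) by (simp add: dist_norm)
      ultimately have "dist (\<gamma> u, a) (fst (f t) + (\<gamma> u - \<gamma> 0), t) < e"
        using norm_Pair_le[of "fst (f a) - fst (f t)" "a - t"] by (simp add: norm_minus_commute)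
      moreover have "(\<gamma> u, a) \<in> K"
        using u unfolding K_def by auto
      ultimately show "(fst (f t) + (\<gamma> u - \<gamma> 0), t) \<in> P"
        using e(2) by (meson mem_ball subsetD)
    qed
  qed
qed

text \<open>The homotopy adds \<open>\<gamma>(l \<rho>(t)) - \<gamma>(0)\<close> to the fibre coordinate, where the cutoff \<open>\<rho>\<close> is \<open>1\<close>
  at \<open>a\<close> and vanishes outside a neighbourhood of \<open>a\<close> small enough for the translation lemma.\<close>
lemma path_component_Gamma_move_value_at:
  fixes P :: "('a::real_normed_vector \<times> real) set"
  assumes P: "open P" and f: "f \<in> sections P A" and a: "a \<in> A" and "\<delta> > 0"
    and g: "path_component_of (Gamma P {a}) (restrict f {a}) g"
  obtains f' where "path_component_of (Gamma P A) f f'" "f' a = g a"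
    "\<And>t. \<delta> \<le> dist t a \<Longrightarrow> f' t = f t"
proof -
  have fc: "continuous_on A f" and fP: "\<And>t. t \<in> A \<Longrightarrow> f t \<in> P"
    and fs: "\<And>t. t \<in> A \<Longrightarrow> snd (f t) = t" and fe: "f \<in> extensional A"
    using f unfolding sections_def by auto
  obtain \<gamma> where \<gamma>: "path \<gamma>" "\<gamma> 0 = fst (restrict f {a} a)" "\<gamma> 1 = fst (g a)"
    "\<forall>u\<in>{0..1}. (\<gamma> u, a) \<in> P"
    by (rule fibre_path_of_path_component_Gamma_singleton[OF g])
  have \<gamma>0: "\<gamma> 0 = fst (f a)"
    using \<gamma>(2) a by simp
  obtain d where d: "d > 0"
    "\<And>t u. t \<in> A \<Longrightarrow> u \<in> {0..1} \<Longrightarrow> dist t a < d \<Longrightarrow> (fst (f t) + (\<gamma> u - \<gamma> 0), t) \<in> P"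
    using translate_fibre_path_near_point[OF P fc a fs[OF a] \<gamma>(1) \<gamma>0 \<gamma>(4)] by blast
  define r where "r = min \<delta> d"
  have r: "r > 0" "r \<le> \<delta>" "r \<le> d"
    using \<open>\<delta> > 0\<close> d(1) unfolding r_def by auto
  define \<rho> where "\<rho> t = max 0 (1 - dist t a / r)" for t
  have \<rho>01: "\<rho> t \<in> {0..1}" for t
    using r(1) by (simp add: \<rho>_def)
  have \<rho>_far: "\<rho> t = 0" if "r \<le> dist t a" for t
    using that r(1) by (simp add: \<rho>_def)
  have "continuous_on UNIV \<rho>"
    unfolding \<rho>_def by (intro continuous_intros) (use r(1) in auto)
  define H where "H p = (fst (f (snd p)) + (\<gamma> (fst p * \<rho> (snd p)) - \<gamma> 0), snd p)"
    for p :: "real \<times> real"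
  have lrho: "l * \<rho> t \<in> {0..1}" if "l \<in> {0..1}" for l t
    using that \<rho>01[of t] by (auto intro: mult_le_one)
  have "continuous_on ({0..1} \<times> A) (\<lambda>p. fst p * \<rho> (snd p))"
    by (intro continuous_intros continuous_on_compose2[OF \<open>continuous_on UNIV \<rho>\<close>]) auto
  then have "continuous_on ({0..1} \<times> A) (\<lambda>p. \<gamma> (fst p * \<rho> (snd p)))"
    by (rule continuous_on_compose2[OF \<gamma>(1)[unfolded path_def]]) (use lrho in auto)
  moreover have "continuous_on ({0..1} \<times> A) (\<lambda>p. f (snd p))"
    by (rule continuous_on_compose2[OF fc]) (auto intro: continuous_intros)
  ultimately have Hc: "continuous_on ({0..1} \<times> A) H"
    unfolding H_def by (intro continuous_intros)
  have H_far: "H (l,t) = f t" if "t \<in> A" "r \<le> dist t a" for l t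
    using that \<rho>_far fs by (simp add: H_def prod_eq_iff)
  have HP: "H (l,t) \<in> P" if "l \<in> {0..1}" "t \<in> A" for l t
  proof (cases "dist t a < r")
    case True
    then show ?thesis
      using d(2)[OF that(2) lrho[OF that(1)]] r(3) by (simp add: H_def)
  next
    case False
    then show ?thesis
      using H_far fP that(2) by simp
  qed
  define p where "p l = restrict (\<lambda>t. H (l,t)) A" for l
  have "p l \<in> sections P A" if "l \<in> {0..1}" for l
  proof -
    have "continuous_on A (\<lambda>t. H (l,t))"
      by (rule continuous_on_compose2[OF Hc]) (use that in \<open>auto intro: continuous_intros\<close>)
    then show ?thesis
      unfolding sections_def p_def using HP[OF that] by (auto simp: H_def)
  qed
  then have "pathin (Gamma P A) p"
    unfolding p_def by (rule pathin_Gamma_homotopy[OF Hc])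
  moreover have "p 0 = f"
    using fs fe by (auto simp: p_def H_def prod_eq_iff extensional_def)
  moreover have "g \<in> sections P {a}"
    using path_component_in_topspace[OF g] by simp
  then have "p 1 a = g a"
    using a \<gamma>(3) \<gamma>0 by (simp add: p_def H_def \<rho>_def sections_def prod_eq_iff)
  moreover have "p 1 t = f t" if "\<delta> \<le> dist t a" for t
    using that r(2) H_far fe by (auto simp: p_def extensional_def)
  ultimately show ?thesis
    by (intro that[of "p 1"]) (auto simp: path_component_of_def intro!: exI[of _ p])
qed

lemma path_component_Gamma_interval_with_endpoints:
  fixes P :: "('a::real_normed_vector \<times> real) set"
  assumes P: "open P" and "a < b"
    and C: "C \<in> path_components_of (Gamma P {a..b})"
    and Ca: "Ca \<in> path_components_of (Gamma P {a})" "\<And>f. f \<in> C \<Longrightarrow> restrict f {a} \<in> Ca"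
    and Cb: "Cb \<in> path_components_of (Gamma P {b})" "\<And>f. f \<in> C \<Longrightarrow> restrict f {b} \<in> Cb"
    and "g \<in> Ca" "h \<in> Cb"
  obtains f where "f \<in> C" "f a = g a" "f b = h b"
proof -
  have ab: "a \<in> {a..b}" "b \<in> {a..b}" "b - a > 0" "b - a \<le> dist a b" "b - a \<le> dist b a"
    using \<open>a < b\<close> by (simp_all add: dist_real_def)
  have C_sections: "f \<in> sections P {a..b}" if "f \<in> C" for f
    using path_components_of_subset[OF C] that by auto
  obtain f0 where f0: "f0 \<in> C"
    using nonempty_path_components_of[OF C] by blast
  have "path_component_of (Gamma P {a}) (restrict f0 {a}) g"
    using path_components_of_mem_iff[OF Ca(1) Ca(2)[OF f0]] \<open>g \<in> Ca\<close> by simp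
  then obtain f1 where f1: "path_component_of (Gamma P {a..b}) f0 f1" "f1 a = g a" "f1 b = f0 b"
    using path_component_Gamma_move_value_at[OF P C_sections[OF f0] ab(1,3)] ab(5) by metis
  have "f1 \<in> C"
    using path_components_of_mem_iff[OF C f0] f1(1) by simp
  have "path_component_of (Gamma P {b}) (restrict f1 {b}) h"
    using path_components_of_mem_iff[OF Cb(1) Cb(2)[OF \<open>f1 \<in> C\<close>]] \<open>h \<in> Cb\<close> by simp
  then obtain f2 where f2: "path_component_of (Gamma P {a..b}) f1 f2" "f2 b = h b" "f2 a = f1 a"
    using path_component_Gamma_move_value_at[OF P C_sections[OF \<open>f1 \<in> C\<close>] ab(2,3)] ab(4) by metis
  have "f2 \<in> C"
    using path_components_of_mem_iff[OF C \<open>f1 \<in> C\<close>] f2(1) by simp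
  with f1(2) f2(2,3) show ?thesis
    using that by simp
qed

definition consecutive_vertices :: "real set \<Rightarrow> real \<Rightarrow> real \<Rightarrow> bool" where
  "consecutive_vertices V a b \<longleftrightarrow> a \<in> V \<and> b \<in> V \<and> a < b \<and> {a<..<b} \<inter> V = {}"

lemma closed_cells_eq:
  "closed_cells V = (\<lambda>v. {v}) ` V \<union> {{a..b} | a b. consecutive_vertices V a b}"
  unfolding closed_cells_def consecutive_vertices_def by auto

lemma singleton_in_closed_cells: "v \<in> V \<Longrightarrow> {v} \<in> closed_cells V"
  unfolding closed_cells_eq by blast

lemma interval_in_closed_cells: "consecutive_vertices V a b \<Longrightarrow> {a..b} \<in> closed_cells V"
  unfolding closed_cells_eq by blast

lemma CW_structure_R_has_greatest:
  assumes V: "CW_structure_R V" and "S \<subseteq> V" "s \<in> S" "\<forall>v\<in>S. v \<le> u"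
  shows "\<exists>m\<in>S. \<forall>v\<in>S. v \<le> m"
proof -
  define F where "F = S \<inter> {s..u}"
  have "finite F"
    using V \<open>S \<subseteq> V\<close> unfolding CW_structure_R_def F_def by (meson Int_mono finite_subset order_refl)
  have "s \<in> F"
    using assms(3,4) unfolding F_def by auto
  have "v \<le> Max F" if "v \<in> S" for v
  proof (cases "s \<le> v")
    case True
    then have "v \<in> F"
      using that assms(4) unfolding F_def by auto
    then show ?thesis
      using \<open>finite F\<close> by simp
  next
    case False
    then show ?thesis
      using Max_ge[OF \<open>finite F\<close> \<open>s \<in> F\<close>] by simp
  qed
  moreover have "Max F \<in> F"
    by (rule Max_in[OF \<open>finite F\<close>]) (use \<open>s \<in> F\<close> in auto)
  then have "Max F \<in> S"
    unfolding F_def by simp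
  ultimately show ?thesis by blast
qed

lemma CW_structure_R_has_least:
  assumes V: "CW_structure_R V" and "S \<subseteq> V" "s \<in> S" "\<forall>v\<in>S. u \<le> v"
  shows "\<exists>m\<in>S. \<forall>v\<in>S. m \<le> v"
proof -
  define F where "F = S \<inter> {u..s}"
  have "finite F"
    using V \<open>S \<subseteq> V\<close> unfolding CW_structure_R_def F_def by (meson Int_mono finite_subset order_refl)
  have "s \<in> F"
    using assms(3,4) unfolding F_def by auto
  have "Min F \<le> v" if "v \<in> S" for v
  proof (cases "v \<le> s")
    case True
    then have "v \<in> F"
      using that assms(4) unfolding F_def by auto
    then show ?thesis
      using \<open>finite F\<close> by simp
  next
    case False
    then show ?thesis
      using Min_le[OF \<open>finite F\<close> \<open>s \<in> F\<close>] by simp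
  qed
  moreover have "Min F \<in> F"
    by (rule Min_in[OF \<open>finite F\<close>]) (use \<open>s \<in> F\<close> in auto)
  then have "Min F \<in> S"
    unfolding F_def by simp
  ultimately show ?thesis by blast
qed

lemma consecutive_vertices_around_right:
  assumes V: "CW_structure_R V"
  obtains a b where "consecutive_vertices V a b" "a \<le> t" "t < b"
proof -
  obtain w w' where w: "w \<in> V" "w < t" and w': "w' \<in> V" "t < w'"
    using V unfolding CW_structure_R_def by blast
  have "\<exists>a\<in>{v\<in>V. v \<le> t}. \<forall>v\<in>{v\<in>V. v \<le> t}. v \<le> a"
    by (rule CW_structure_R_has_greatest[OF V _ _, where u = t]) (use w in auto)
  then obtain a where a: "a \<in> V" "a \<le> t" "\<And>v. v \<in> V \<Longrightarrow> v \<le> t \<Longrightarrow> v \<le> a"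
    by blast
  have "\<exists>b\<in>{v\<in>V. t < v}. \<forall>v\<in>{v\<in>V. t < v}. b \<le> v"
    by (rule CW_structure_R_has_least[OF V _ _, where u = t]) (use w' in auto)
  then obtain b where b: "b \<in> V" "t < b" "\<And>v. v \<in> V \<Longrightarrow> t < v \<Longrightarrow> b \<le> v"
    by blast
  have "{a<..<b} \<inter> V = {}"
  proof (intro equals0I)
    fix v
    assume "v \<in> {a<..<b} \<inter> V"
    then show False
      using a(3)[of v] b(3)[of v] by (cases "v \<le> t") auto
  qed
  then show ?thesis
    using that a b unfolding consecutive_vertices_def by simp
qed

lemma consecutive_vertices_around_left:
  assumes V: "CW_structure_R V"
  obtains a b where "consecutive_vertices V a b" "a < t" "t \<le> b"
proof -
  obtain w w' where w: "w \<in> V" "w < t" and w': "w' \<in> V" "t < w'"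
    using V unfolding CW_structure_R_def by blast
  have "\<exists>a\<in>{v\<in>V. v < t}. \<forall>v\<in>{v\<in>V. v < t}. v \<le> a"
    by (rule CW_structure_R_has_greatest[OF V _ _, where u = t]) (use w in auto)
  then obtain a where a: "a \<in> V" "a < t" "\<And>v. v \<in> V \<Longrightarrow> v < t \<Longrightarrow> v \<le> a"
    by blast
  have "\<exists>b\<in>{v\<in>V. t \<le> v}. \<forall>v\<in>{v\<in>V. t \<le> v}. b \<le> v"
    by (rule CW_structure_R_has_least[OF V _ _, where u = t]) (use w' in auto)
  then obtain b where b: "b \<in> V" "t \<le> b" "\<And>v. v \<in> V \<Longrightarrow> t \<le> v \<Longrightarrow> b \<le> v"
    by blast
  have "{a<..<b} \<inter> V = {}"
  proof (intro equals0I)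
    fix v
    assume "v \<in> {a<..<b} \<inter> V"
    then show False
      using a(3)[of v] b(3)[of v] by (cases "v < t") auto
  qed
  then show ?thesis
    using that a b unfolding consecutive_vertices_def by simp
qed

lemma consecutive_vertices_no_vertex_between:
  assumes "consecutive_vertices V a b" "v \<in> V" "a < v" "v < b"
  shows False
  using assms unfolding consecutive_vertices_def by (metis IntI emptyE greaterThanLessThan_iff)

lemma consecutive_vertices_unique:
  assumes ab: "consecutive_vertices V a b" and ab': "consecutive_vertices V a' b'"
    and "a \<le> t" "t < b" "a' \<le> t" "t < b'"
  shows "a = a' \<and> b = b'"
proof -
  have "a \<in> V" "b \<in> V" "a' \<in> V" "b' \<in> V"
    using ab ab' unfolding consecutive_vertices_def by auto
  have "\<not> a < a'"
    using consecutive_vertices_no_vertex_between[OF ab \<open>a' \<in> V\<close>] assms(5,4) by (metis le_less_trans)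
  moreover have "\<not> a' < a"
    using consecutive_vertices_no_vertex_between[OF ab' \<open>a \<in> V\<close>] assms(3,6) by (metis le_less_trans)
  moreover have "\<not> b < b'"
    using consecutive_vertices_no_vertex_between[OF ab' \<open>b \<in> V\<close>] assms(4,5) by (metis le_less_trans)
  moreover have "\<not> b' < b"
    using consecutive_vertices_no_vertex_between[OF ab \<open>b' \<in> V\<close>] assms(3,6) by (metis le_less_trans)
  ultimately show ?thesis by simp
qed

lemma consecutive_vertices_starting_at:
  assumes V: "CW_structure_R V" and "v \<in> V"
  obtains b where "consecutive_vertices V v b"
proof -
  obtain a b where ab: "consecutive_vertices V a b" "a \<le> v" "v < b"
    by (rule consecutive_vertices_around_right[OF V])
  then have "a = v"
    using consecutive_vertices_no_vertex_between[OF ab(1) \<open>v \<in> V\<close>] by fastforce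
  with ab(1) show ?thesis
    using that by simp
qed

lemma glue_consecutive_cell_sections:
  fixes P :: "('a::topological_space \<times> real) set"
  assumes V: "CW_structure_R V"
    and F: "\<And>a b. consecutive_vertices V a b \<Longrightarrow> F a b \<in> sections P {a..b}"
    and agree: "\<And>a b c. consecutive_vertices V a b \<Longrightarrow> consecutive_vertices V b c \<Longrightarrow> F a b b = F b c b"
  shows "\<exists>s\<in>sections P UNIV. \<forall>a b. consecutive_vertices V a b \<longrightarrow> restrict s {a..b} = F a b"
proof -
  have "\<forall>t. \<exists>c. consecutive_vertices V (fst c) (snd c) \<and> fst c \<le> t \<and> t < snd c"
    by (metis consecutive_vertices_around_right[OF V] fst_conv snd_conv)
  then obtain cell where cell: "\<And>t. consecutive_vertices V (fst (cell t)) (snd (cell t))"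
    "\<And>t. fst (cell t) \<le> t" "\<And>t. t < snd (cell t)"
    by metis
  define s where "s t = F (fst (cell t)) (snd (cell t)) t" for t
  have s_eq: "s t = F a b t" if ab: "consecutive_vertices V a b" and t: "t \<in> {a..b}" for a b t
  proof (cases "t < b")
    case True
    then show ?thesis
      using consecutive_vertices_unique[OF ab cell(1) _ _ cell(2,3)] t by (simp add: s_def)
  next
    case False
    with t have "t = b" by simp
    have "b \<in> V"
      using ab unfolding consecutive_vertices_def by simp
    then have "fst (cell b) = b"
      using consecutive_vertices_no_vertex_between[OF cell(1)[of b] \<open>b \<in> V\<close> _ cell(3)] cell(2)[of b]
      by fastforce
    then show ?thesis
      using agree[OF ab, of "snd (cell b)"] cell(1)[of b] \<open>t = b\<close> by (simp add: s_def)
  qed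
  have s_restrict: "restrict s {a..b} = F a b" if "consecutive_vertices V a b" for a b
    using s_eq[OF that] F[OF that] by (auto simp: sections_def extensional_def)
  have s_cont: "continuous_on {a..b} s" if "consecutive_vertices V a b" for a b
  proof -
    have "continuous_on {a..b} (F a b)"
      using F[OF that] unfolding sections_def by simp
    then show ?thesis
      by (rule continuous_on_eq) (simp add: s_eq[OF that])
  qed
  have "isCont s t" for t
  proof -
    obtain a b where ab: "consecutive_vertices V a b" "a \<le> t" "t < b"
      by (rule consecutive_vertices_around_right[OF V])
    obtain a' b' where ab': "consecutive_vertices V a' b'" "a' < t" "t \<le> b'"
      by (rule consecutive_vertices_around_left[OF V])
    have "continuous_on ({a'..b'} \<union> {a..b}) s"
      using s_cont[OF ab(1)] s_cont[OF ab'(1)] by (intro continuous_on_closed_Un) auto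
    moreover have "{a'<..<b} \<subseteq> {a'..b'} \<union> {a..b}"
      using ab(2) ab'(3) by auto
    ultimately have "continuous_on {a'<..<b} s"
      by (rule continuous_on_subset)
    then show ?thesis
      using ab(3) ab'(2) by (simp add: continuous_on_eq_continuous_at)
  qed
  moreover have "s t \<in> P \<and> snd (s t) = t" for t
    using F[OF cell(1)[of t]] cell(2,3)[of t] unfolding sections_def s_def by auto
  ultimately have "s \<in> sections P UNIV"
    unfolding sections_def by (auto intro: continuous_at_imp_continuous_on)
  with s_restrict show ?thesis
    by blast
qed

lemma compatible_components_representatives:
  fixes P :: "('a::real_normed_vector \<times> real) set"
  assumes P: "open P"
    and x: "\<forall>c\<in>closed_cells V. x c \<in> path_components_of (Gamma P c)"
    and compat: "\<forall>c\<in>closed_cells V. \<forall>d\<in>closed_cells V. c \<subseteq> d \<longrightarrow> (\<forall>s\<in>x d. restrict s c \<in> x c)"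
  shows "\<exists>F. (\<forall>a b. consecutive_vertices V a b \<longrightarrow> F a b \<in> x {a..b}) \<and>
    (\<forall>a b c. consecutive_vertices V a b \<longrightarrow> consecutive_vertices V b c \<longrightarrow> F a b b = F b c b)"
proof -
  have "\<forall>v\<in>V. \<exists>g. g \<in> x {v}"
    using nonempty_path_components_of x singleton_in_closed_cells by blast
  then obtain p where p: "\<And>v. v \<in> V \<Longrightarrow> p v \<in> x {v}"
    by metis
  have "\<exists>f. f \<in> x {a..b} \<and> f a = p a a \<and> f b = p b b" if ab: "consecutive_vertices V a b" for a b
  proof -
    have "a \<in> V" "b \<in> V" "a < b"
      using ab unfolding consecutive_vertices_def by auto
    have cells: "{a} \<in> closed_cells V" "{b} \<in> closed_cells V" "{a..b} \<in> closed_cells V"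
      using \<open>a \<in> V\<close> \<open>b \<in> V\<close> ab by (simp_all add: singleton_in_closed_cells interval_in_closed_cells)
    have restr: "restrict f {a} \<in> x {a}" "restrict f {b} \<in> x {b}" if "f \<in> x {a..b}" for f
      using compat[rule_format, OF cells(1,3) _ that] compat[rule_format, OF cells(2,3) _ that] \<open>a < b\<close>
      by auto
    show ?thesis
      using path_component_Gamma_interval_with_endpoints[OF P \<open>a < b\<close> x[rule_format, OF cells(3)]
          x[rule_format, OF cells(1)] restr(1) x[rule_format, OF cells(2)] restr(2) p[OF \<open>a \<in> V\<close>] p[OF \<open>b \<in> V\<close>]]
      by metis
  qed
  then obtain F where F: "\<And>a b. consecutive_vertices V a b \<Longrightarrow>
      F a b \<in> x {a..b} \<and> F a b a = p a a \<and> F a b b = p b b"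
    by metis
  then show ?thesis
    by (intro exI[of _ F]) simp
qed

lemma compatible_family_mem_closed_cells:
  assumes V: "CW_structure_R V"
    and compat: "\<forall>c\<in>closed_cells V. \<forall>d\<in>closed_cells V. c \<subseteq> d \<longrightarrow> (\<forall>s\<in>x d. restrict s c \<in> x c)"
    and cells: "\<And>a b. consecutive_vertices V a b \<Longrightarrow> restrict s {a..b} \<in> x {a..b}"
  shows "\<forall>c\<in>closed_cells V. restrict s c \<in> x c"
proof
  fix c
  assume c: "c \<in> closed_cells V"
  then consider v where "v \<in> V" "c = {v}" | a b where "consecutive_vertices V a b" "c = {a..b}"
    unfolding closed_cells_eq by blast
  then show "restrict s c \<in> x c"
  proof cases
    case (1 v)
    obtain b where vb: "consecutive_vertices V v b"
      using consecutive_vertices_starting_at[OF V \<open>v \<in> V\<close>] .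
    then have "{v} \<subseteq> {v..b}"
      unfolding consecutive_vertices_def by auto
    then have "restrict (restrict s {v..b}) {v} \<in> x {v}"
      by (rule compat[rule_format, OF c[unfolded 1] interval_in_closed_cells[OF vb] _ cells[OF vb]])
    then show ?thesis
      using 1 \<open>{v} \<subseteq> {v..b}\<close> by (simp add: restrict_restrict Int_absorb1)
  next
    case (2 a b)
    then show ?thesis
      using cells by simp
  qed
qed

theorem lemmaA1:
  fixes V :: "real set" and P :: "((real^'n) \<times> real) set"
    and x :: "real set \<Rightarrow> (real \<Rightarrow> (real^'n) \<times> real) set"
  assumes "CW_structure_R V"
    and "open P"
    and "\<forall>c\<in>closed_cells V. x c \<in> path_components_of (Gamma P c)"
    and "\<forall>c\<in>closed_cells V. \<forall>d\<in>closed_cells V. c \<subseteq> d \<longrightarrow> (\<forall>s\<in>x d. restrict s c \<in> x c)"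
  shows "\<exists>s\<in>sections P UNIV. \<forall>c\<in>closed_cells V. restrict s c \<in> x c"
proof -
  obtain F where F: "\<forall>a b. consecutive_vertices V a b \<longrightarrow> F a b \<in> x {a..b}"
    and agree: "\<forall>a b c. consecutive_vertices V a b \<longrightarrow> consecutive_vertices V b c \<longrightarrow> F a b b = F b c b"
    using compatible_components_representatives[OF assms(2-4)] by blast
  have "F a b \<in> sections P {a..b}" if "consecutive_vertices V a b" for a b
    using path_components_of_subset[OF assms(3)[rule_format, OF interval_in_closed_cells[OF that]]]
      F that by auto
  then obtain s where s: "s \<in> sections P UNIV"
    and s_cells: "\<forall>a b. consecutive_vertices V a b \<longrightarrow> restrict s {a..b} = F a b"
    using glue_consecutive_cell_sections[OF assms(1), of F P] agree by blast
  have "restrict s {a..b} \<in> x {a..b}" if "consecutive_vertices V a b" for a b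
    using s_cells F that by simp
  then show ?thesis
    using s compatible_family_mem_closed_cells[OF assms(1,4)] by blast
qed

end
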